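(* Let $p\in\Delta_n$ be a probability distribution on $\{1,\dots,n\}$ and let $\rho>0$ satisfy $\|p\|_2\le\sqrt2\,\rho$. Let $Q$ be a positive integer such that $$3\left[2^{7/4}Q^{-1/2}\rho^{3/2}+2Q^{-1}\rho\right]\le\tfrac13\rho^2 .$$ Let $\xi,\xi'$ be the empirical distributions of two disjoint (consecutive) segments, of cardinality $Q$ each, of an i.i.d. sample drawn from $p$. Then $$\mathbb P\left\{\left|\xi^T\xi'-\|p\|_2^2\right|>\tfrac13\rho^2\right\}\le\tfrac13 .$$
   Context: $\Delta_n=\{r\in\mathbb{R}^n:r\ge0,\sum_ir_i=1\}$. The empirical distribution of a set of observations with values in $\{1,\dots,n\}$ is the vector whose $i$-th entry is the fraction of observations equal to $i$. *)

theory Defs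
  imports "HOL-Probability.Probability"
begin

definition empirical :: "(nat \<Rightarrow> 'a) \<Rightarrow> nat set \<Rightarrow> 'a \<Rightarrow> real" where
  "empirical x S i = real (card {k \<in> S. x k = i}) / real (card S)"

definition iid_sample :: "nat \<Rightarrow> 'a pmf \<Rightarrow> (nat \<Rightarrow> 'a) pmf" where
  "iid_sample m P = Pi_pmf {..<m} undefined (\<lambda>_. P)"

end

theory Submission
  imports Defs
begin

text \<open>Write \<open>e\<^sub>k\<^sub>l\<close> for the indicator of \<open>x\<^sub>k = x\<^sub>l\<close>. The inner product of the two
  empirical distributions is the average of \<open>e\<^sub>k\<^sub>l\<close> over the \<open>Q\<^sup>2\<close> pairs \<open>k < Q \<le> l\<close>,
  and each \<open>e\<^sub>k\<^sub>l\<close> has mean \<open>\<parallel>p\<parallel>\<^sup>2\<close>. Two such indicators are uncorrelated unless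
  their pairs share an index, and pairs sharing exactly one index have covariance at most
  \<open>\<Sum> p\<^sub>i\<^sup>3\<close>. Hence the variance is at most \<open>\<parallel>p\<parallel>\<^sup>2/Q\<^sup>2 + 2 \<Sum> p\<^sub>i\<^sup>3/Q\<close>, which
  the hypotheses bound by the square of the bracket \<open>B\<close>; as \<open>3B \<le> \<rho>\<^sup>2/3\<close>,
  Chebyshev's inequality bounds the probability even by \<open>1/9\<close>.\<close>

lemma finite_set_pmf_iid_sample:
  "finite (set_pmf (iid_sample m (P :: 'a::finite pmf)))"
  unfolding iid_sample_def by (auto simp: set_Pi_pmf intro!: finite_PiE_dflt)

lemma integrable_iid_sample:
  "integrable (measure_pmf (iid_sample m (P :: 'a::finite pmf))) (f :: _ \<Rightarrow> real)"
  by (rule integrable_measure_pmf_finite[OF finite_set_pmf_iid_sample])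

lemma expectation_iid_sample_prod:
  fixes g :: "nat \<Rightarrow> 'a \<Rightarrow> real"
  assumes "J \<subseteq> {..<m}"
    and "\<And>t. t \<in> J \<Longrightarrow> integrable (measure_pmf P) (g t)"
    and "\<And>t y. t \<in> J \<Longrightarrow> g t y \<ge> 0"
  shows "measure_pmf.expectation (iid_sample m P) (\<lambda>x. \<Prod>t\<in>J. g t (x t))
       = (\<Prod>t\<in>J. measure_pmf.expectation P (g t))"
proof -
  have "finite J" using assms(1) finite_subset by blast
  have "Pi_pmf J undefined (\<lambda>_. P)
      = map_pmf (\<lambda>x t. if t \<in> J then x t else undefined) (iid_sample m P)"
    unfolding iid_sample_def using assms(1) by (rule Pi_pmf_subset[OF finite_lessThan])
  then have "measure_pmf.expectation (iid_sample m P) (\<lambda>x. \<Prod>t\<in>J. g t (x t))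
      = measure_pmf.expectation (Pi_pmf J undefined (\<lambda>_. P)) (\<lambda>x. \<Prod>t\<in>J. g t (x t))"
    by (simp cong: prod.cong)
  also have "\<dots> = (\<Prod>t\<in>J. measure_pmf.expectation P (g t))"
    using \<open>finite J\<close> assms(2,3) by (rule expectation_prod_Pi_pmf)
  finally show ?thesis .
qed

lemma expectation_of_bool_eq_pmf: "measure_pmf.expectation P (\<lambda>z. of_bool (z = a) :: real) = pmf P a"
proof -
  have "(\<lambda>z. of_bool (z = a) :: real) = indicator {a}" by (auto simp: indicator_def)
  then show ?thesis by (simp add: measure_pmf_single)
qed

lemma expectation_iid_sample_prod_indicator:
  fixes P :: "'a::finite pmf"
  assumes "J \<subseteq> {..<m}"
  shows "measure_pmf.expectation (iid_sample m P) (\<lambda>x. \<Prod>t\<in>J. of_bool (x t = y t))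
       = (\<Prod>t\<in>J. pmf P (y t))"
  using expectation_iid_sample_prod[OF assms, of P "\<lambda>t z. of_bool (z = y t)"]
  by (simp add: integrable_measure_pmf_finite expectation_of_bool_eq_pmf)

definition coincidence :: "(nat \<Rightarrow> 'a) \<Rightarrow> nat \<Rightarrow> nat \<Rightarrow> real" where
  "coincidence x k l = of_bool (x k = x l)"

lemma coincidence_commute: "coincidence x k l = coincidence x l k"
  by (auto simp: coincidence_def)

lemma coincidence_eq_sum:
  fixes x :: "nat \<Rightarrow> 'a::finite"
  shows "coincidence x k l = (\<Sum>i\<in>UNIV. of_bool (x k = i) * of_bool (x l = i))"
  by (simp add: coincidence_def)

lemma expectation_coincidence:
  fixes P :: "'a::finite pmf"
  assumes "k \<noteq> l" "k < m" "l < m"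
  shows "measure_pmf.expectation (iid_sample m P) (\<lambda>x. coincidence x k l)
       = (\<Sum>i\<in>UNIV. pmf P i ^ 2)"
proof -
  have "coincidence x k l = (\<Sum>i\<in>UNIV. \<Prod>t\<in>{k,l}. of_bool (x t = i))" for x :: "nat \<Rightarrow> 'a"
    using assms(1) by (simp add: coincidence_eq_sum)
  moreover have "measure_pmf.expectation (iid_sample m P) (\<lambda>x. \<Prod>t\<in>{k,l}. of_bool (x t = i))
      = pmf P i ^ 2" for i
    using expectation_iid_sample_prod_indicator[of "{k,l}" m P "\<lambda>_. i"] assms
    by (simp add: power2_eq_square)
  ultimately show ?thesis
    by (simp add: Bochner_Integration.integral_sum integrable_iid_sample)
qed

lemma expectation_coincidence_shared:
  fixes P :: "'a::finite pmf"
  assumes "distinct [k, l, l']" "k < m" "l < m" "l' < m"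
  shows "measure_pmf.expectation (iid_sample m P) (\<lambda>x. coincidence x k l * coincidence x k l')
       = (\<Sum>i\<in>UNIV. pmf P i ^ 3)"
proof -
  have "coincidence x k l * coincidence x k l' = (\<Sum>i\<in>UNIV. \<Prod>t\<in>{k,l,l'}. of_bool (x t = i))"
    for x :: "nat \<Rightarrow> 'a"
    using assms(1) by (simp add: coincidence_def)
  moreover have "measure_pmf.expectation (iid_sample m P) (\<lambda>x. \<Prod>t\<in>{k,l,l'}. of_bool (x t = i))
      = pmf P i ^ 3" for i
    using expectation_iid_sample_prod_indicator[of "{k,l,l'}" m P "\<lambda>_. i"] assms
    by (simp add: power3_eq_cube)
  ultimately show ?thesis
    by (simp add: Bochner_Integration.integral_sum integrable_iid_sample)
qed

lemma expectation_coincidence_disjoint: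
  fixes P :: "'a::finite pmf"
  assumes "distinct [k, l, k', l']" "k < m" "l < m" "k' < m" "l' < m"
  shows "measure_pmf.expectation (iid_sample m P) (\<lambda>x. coincidence x k l * coincidence x k' l')
       = (\<Sum>i\<in>UNIV. pmf P i ^ 2) ^ 2"
proof -
  define y where "y i j t = (if t \<in> {k, l} then i else j)" for i j :: 'a and t
  have labels_split: "(\<Prod>t\<in>{k,l,k',l'}. of_bool (x t = y i j t))
      = of_bool (x k = i) * of_bool (x l = i) * (of_bool (x k' = j) * of_bool (x l' = j))"
    for x :: "nat \<Rightarrow> 'a" and i j
    using assms(1) by (simp add: y_def mult_ac)
  have "coincidence x k l * coincidence x k' l'
      = (\<Sum>i\<in>UNIV. \<Sum>j\<in>UNIV. \<Prod>t\<in>{k,l,k',l'}. of_bool (x t = y i j t))" for x :: "nat \<Rightarrow> 'a"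
    unfolding coincidence_eq_sum sum_product labels_split by (simp only: mult.assoc)
  moreover have "measure_pmf.expectation (iid_sample m P) (\<lambda>x. \<Prod>t\<in>{k,l,k',l'}. of_bool (x t = y i j t))
      = pmf P i ^ 2 * pmf P j ^ 2" for i j
    using expectation_iid_sample_prod_indicator[of "{k,l,k',l'}" m P "y i j"] assms
    by (simp add: y_def power2_eq_square)
  ultimately show ?thesis
    by (simp add: Bochner_Integration.integral_sum integrable_iid_sample power2_eq_square sum_product)
qed

lemma expectation_centered_coincidence_mult_le:
  fixes P :: "'a::finite pmf"
  assumes "k \<noteq> l" "k \<noteq> l'" "k' \<noteq> l" "k' \<noteq> l'" "k < m" "l < m" "k' < m" "l' < m"
  defines "s \<equiv> \<Sum>i\<in>UNIV. pmf P i ^ 2" and "c \<equiv> \<Sum>i\<in>UNIV. pmf P i ^ 3"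
  shows "measure_pmf.expectation (iid_sample m P)
           (\<lambda>x. (coincidence x k l - s) * (coincidence x k' l' - s))
       \<le> (if l' = l then if k' = k then s else 0 else 0) + (if k' = k then c else 0)
         + (if l' = l then c else 0)"
proof -
  let ?E = "measure_pmf.expectation (iid_sample m P)"
  have "s \<ge> 0" "c \<ge> 0" unfolding s_def c_def by (auto intro!: sum_nonneg)
  have "?E (\<lambda>x. (coincidence x k l - s) * (coincidence x k' l' - s))
      = ?E (\<lambda>x. coincidence x k l * coincidence x k' l') - s * s"
    using assms by (simp add: algebra_simps integrable_iid_sample expectation_coincidence s_def)
  moreover consider "k' = k" "l' = l" | "k' = k" "l' \<noteq> l" | "k' \<noteq> k" "l' = l" | "k' \<noteq> k" "l' \<noteq> l"
    by blast
  then have "?E (\<lambda>x. coincidence x k l * coincidence x k' l')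
      \<le> (if l' = l then if k' = k then s else 0 else 0) + (if k' = k then c else 0)
         + (if l' = l then c else 0) + s * s"
  proof cases
    case 1
    have idem: "(\<lambda>x. coincidence x k l * coincidence x k l) = (\<lambda>x. coincidence x k l)"
      by (simp add: coincidence_def fun_eq_iff)
    show ?thesis
      unfolding 1 idem using assms \<open>s \<ge> 0\<close> \<open>c \<ge> 0\<close> by (simp add: expectation_coincidence)
  next
    case 2
    then show ?thesis
      using assms \<open>s \<ge> 0\<close> by (simp add: expectation_coincidence_shared)
  next
    case 3
    then show ?thesis
      using assms \<open>s \<ge> 0\<close> expectation_coincidence_shared[of l k k' m P]
      by (simp add: coincidence_commute)
  next
    case 4
    then show ?thesis
      using assms by (simp add: expectation_coincidence_disjoint power2_eq_square)
  qed
  ultimately show ?thesis by linarith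
qed

lemma expectation_square_sum_centered_coincidences_le:
  fixes P :: "'a::finite pmf"
  assumes "K \<subseteq> {..<m}" "L \<subseteq> {..<m}" "K \<inter> L = {}"
  defines "s \<equiv> \<Sum>i\<in>UNIV. pmf P i ^ 2" and "c \<equiv> \<Sum>i\<in>UNIV. pmf P i ^ 3"
  shows "measure_pmf.expectation (iid_sample m P) (\<lambda>x. (\<Sum>k\<in>K. \<Sum>l\<in>L. coincidence x k l - s) ^ 2)
       \<le> real (card K * card L) * s + real (card K * card L * (card K + card L)) * c"
proof -
  let ?E = "measure_pmf.expectation (iid_sample m P)"
  have "finite K" "finite L" using assms(1,2) finite_subset by blast+
  have "?E (\<lambda>x. (\<Sum>k\<in>K. \<Sum>l\<in>L. coincidence x k l - s) ^ 2)
      = ?E (\<lambda>x. \<Sum>k\<in>K. \<Sum>l\<in>L. \<Sum>k'\<in>K. \<Sum>l'\<in>L. (coincidence x k l - s) * (coincidence x k' l' - s))"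
    by (simp only: power2_eq_square sum_distrib_right, simp only: sum_distrib_left)
  also have "\<dots> = (\<Sum>k\<in>K. \<Sum>l\<in>L. \<Sum>k'\<in>K. \<Sum>l'\<in>L.
      ?E (\<lambda>x. (coincidence x k l - s) * (coincidence x k' l' - s)))"
    by (simp add: Bochner_Integration.integral_sum integrable_iid_sample)
  also have "\<dots> \<le> (\<Sum>k\<in>K. \<Sum>l\<in>L. \<Sum>k'\<in>K. \<Sum>l'\<in>L.
      (if l' = l then if k' = k then s else 0 else 0) + (if k' = k then c else 0)
        + (if l' = l then c else 0))"
    unfolding s_def c_def using assms(1-3)
    by (intro sum_mono expectation_centered_coincidence_mult_le) auto
  also have "\<dots> = real (card K * card L) * s + real (card K * card L * (card K + card L)) * c"
    using \<open>finite K\<close> \<open>finite L\<close> by (simp add: sum.distrib flip: sum_distrib_left) (simp add: algebra_simps)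
  finally show ?thesis .
qed

lemma inner_empirical_eq:
  fixes x :: "nat \<Rightarrow> 'a::finite"
  assumes "finite K" "finite L"
  shows "(\<Sum>i\<in>UNIV. empirical x K i * empirical x L i)
       = (\<Sum>k\<in>K. \<Sum>l\<in>L. coincidence x k l) / (real (card K) * real (card L))"
proof -
  have count: "real (card {k \<in> A. x k = i}) = (\<Sum>k\<in>A. of_bool (x k = i))" if "finite A" for A i
    using that by (simp add: Int_def conj_commute)
  have "(\<Sum>i\<in>UNIV. empirical x K i * empirical x L i)
      = (\<Sum>i\<in>UNIV. (\<Sum>k\<in>K. of_bool (x k = i)) * (\<Sum>l\<in>L. of_bool (x l = i)))
        / (real (card K) * real (card L))"
    unfolding empirical_def count[OF assms(1)] count[OF assms(2)] by (subst sum_divide_distrib) simp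
  also have "\<dots> = (\<Sum>k\<in>K. \<Sum>l\<in>L. coincidence x k l) / (real (card K) * real (card L))"
    by (simp only: coincidence_eq_sum sum_product sum.swap[of _ UNIV])
  finally show ?thesis .
qed

lemma expectation_square_inner_empirical_deviation_le:
  fixes P :: "'a::finite pmf"
  assumes "K \<subseteq> {..<m}" "L \<subseteq> {..<m}" "K \<inter> L = {}" "K \<noteq> {}" "L \<noteq> {}"
  defines "s \<equiv> \<Sum>i\<in>UNIV. pmf P i ^ 2" and "c \<equiv> \<Sum>i\<in>UNIV. pmf P i ^ 3"
  shows "measure_pmf.expectation (iid_sample m P)
           (\<lambda>x. ((\<Sum>i\<in>UNIV. empirical x K i * empirical x L i) - s) ^ 2)
       \<le> s / (real (card K) * real (card L)) + (1 / real (card K) + 1 / real (card L)) * c"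
proof -
  let ?E = "measure_pmf.expectation (iid_sample m P)"
  define F where "F x = (\<Sum>k\<in>K. \<Sum>l\<in>L. coincidence x k l - s)" for x :: "nat \<Rightarrow> 'a"
  define n where "n = real (card K) * real (card L)"
  have "finite K" "finite L" using assms(1,2) finite_subset by blast+
  then have "card K > 0" "card L > 0" using assms(4,5) by (simp_all add: card_gt_0_iff)
  then have "n > 0" by (simp add: n_def)
  have deviation: "(\<Sum>i\<in>UNIV. empirical x K i * empirical x L i) - s = F x / n" for x :: "nat \<Rightarrow> 'a"
    using \<open>finite K\<close> \<open>finite L\<close> assms(4,5)
    by (simp add: inner_empirical_eq F_def n_def sum_subtractf field_simps)
  have "?E (\<lambda>x. ((\<Sum>i\<in>UNIV. empirical x K i * empirical x L i) - s) ^ 2) = ?E (\<lambda>x. F x ^ 2) / n ^ 2"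
    by (simp add: deviation power_divide)
  also have "\<dots> \<le> (n * s + n * (real (card K) + real (card L)) * c) / n ^ 2"
    using expectation_square_sum_centered_coincidences_le[OF assms(1-3), of P]
    by (intro divide_right_mono) (simp_all add: F_def n_def s_def c_def)
  also have "\<dots> = s / (real (card K) * real (card L)) + (1 / real (card K) + 1 / real (card L)) * c"
    using \<open>card K > 0\<close> \<open>card L > 0\<close> unfolding n_def by (simp add: field_simps power2_eq_square)
  finally show ?thesis .
qed

lemma sum_cube_le_sqrt_sum_square_mult:
  fixes f :: "'b \<Rightarrow> real"
  assumes "finite A" "\<And>i. i \<in> A \<Longrightarrow> f i \<ge> 0"
  shows "(\<Sum>i\<in>A. f i ^ 3) \<le> sqrt (\<Sum>i\<in>A. f i ^ 2) * (\<Sum>i\<in>A. f i ^ 2)"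
proof -
  have "f i ^ 3 \<le> sqrt (\<Sum>i\<in>A. f i ^ 2) * f i ^ 2" if "i \<in> A" for i
  proof -
    have "f i ^ 2 \<le> (\<Sum>i\<in>A. f i ^ 2)"
      using assms that by (intro member_le_sum) auto
    then have "f i \<le> sqrt (\<Sum>i\<in>A. f i ^ 2)"
      by (simp add: real_le_rsqrt)
    then have "f i * f i ^ 2 \<le> sqrt (\<Sum>i\<in>A. f i ^ 2) * f i ^ 2"
      by (rule mult_right_mono) simp
    then show ?thesis
      by (simp add: power2_eq_square power3_eq_cube)
  qed
  then show ?thesis
    by (simp add: sum_distrib_left sum_mono)
qed

lemma powr_threshold_term_square:
  fixes \<rho> :: real and Q :: nat
  assumes "\<rho> > 0" "Q > 0"
  shows "(2 powr (7/4) * real Q powr (-1/2) * \<rho> powr (3/2)) ^ 2 = 8 * sqrt 2 * \<rho> ^ 3 / real Q"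
proof -
  have "((2::real) powr (7/4)) ^ 2 = 2 powr 3 * 2 powr (1/2)"
    by (subst powr_add[symmetric]) (simp add: powr_power)
  also have "\<dots> = 8 * sqrt 2"
    by (simp add: powr_half_sqrt)
  finally have "((2::real) powr (7/4)) ^ 2 = 8 * sqrt 2" .
  moreover have "(real Q powr (-1/2)) ^ 2 = 1 / real Q"
    using assms by (simp add: powr_power powr_minus_divide power_divide)
  moreover have "(\<rho> powr (3/2)) ^ 2 = \<rho> ^ 3"
    using assms by (simp add: powr_power)
  ultimately show ?thesis
    by (simp add: power_mult_distrib)
qed

lemma second_moment_bound_le_threshold_square:
  fixes \<rho> s c :: real and Q :: nat
  assumes "\<rho> > 0" "Q > 0" "s \<le> 2 * \<rho> ^ 2" "c \<le> 2 * sqrt 2 * \<rho> ^ 3"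
  shows "s / (real Q * real Q) + (1 / real Q + 1 / real Q) * c
       \<le> (2 powr (7/4) * real Q powr (-1/2) * \<rho> powr (3/2) + 2 * (1 / real Q) * \<rho>) ^ 2"
proof -
  define A where "A = 2 powr (7/4) * real Q powr (-1/2) * \<rho> powr (3/2)"
  define b where "b = 2 * (1 / real Q) * \<rho>"
  have "A \<ge> 0" "b \<ge> 0" using assms(1) by (simp_all add: A_def b_def)
  have "s \<le> (2 * \<rho>) ^ 2"
    using assms(3) by (simp add: power_mult_distrib) (use zero_le_power2[of \<rho>] in linarith)
  then have "s / (real Q * real Q) \<le> b ^ 2"
    by (simp add: b_def power_mult_distrib power_divide power2_eq_square divide_right_mono)
  moreover have "(1 / real Q + 1 / real Q) * c \<le> A ^ 2"
  proof -
    have "(1 / real Q + 1 / real Q) * c = 2 / real Q * c"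
      by simp
    also have "\<dots> \<le> 2 / real Q * (2 * sqrt 2 * \<rho> ^ 3)"
      using assms(4) by (intro mult_left_mono) simp_all
    also have "\<dots> \<le> 8 * sqrt 2 * \<rho> ^ 3 / real Q"
      using assms(1) by (simp add: divide_right_mono)
    finally show ?thesis
      unfolding A_def powr_threshold_term_square[OF assms(1,2)] .
  qed
  moreover have "A ^ 2 + b ^ 2 \<le> (A + b) ^ 2"
    using \<open>A \<ge> 0\<close> \<open>b \<ge> 0\<close> by (simp add: power2_sum)
  ultimately show ?thesis
    unfolding A_def b_def by linarith
qed

lemma sum_pmf_power_bounds:
  fixes P :: "'a::finite pmf" and \<rho> :: real
  assumes "\<rho> > 0" "sqrt (\<Sum>i\<in>UNIV. pmf P i ^ 2) \<le> sqrt 2 * \<rho>"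
  shows "(\<Sum>i\<in>UNIV. pmf P i ^ 2) \<le> 2 * \<rho> ^ 2" and "(\<Sum>i\<in>UNIV. pmf P i ^ 3) \<le> 2 * sqrt 2 * \<rho> ^ 3"
proof -
  define s where "s = (\<Sum>i\<in>UNIV. pmf P i ^ 2)"
  show "s \<le> 2 * \<rho> ^ 2"
    using assms real_sqrt_le_iff[of s "2 * \<rho> ^ 2"] by (simp add: s_def real_sqrt_mult)
  have "(\<Sum>i\<in>UNIV. pmf P i ^ 3) \<le> sqrt s * s"
    unfolding s_def by (rule sum_cube_le_sqrt_sum_square_mult) simp_all
  also have "\<dots> \<le> (sqrt 2 * \<rho>) * (2 * \<rho> ^ 2)"
    using assms \<open>s \<le> 2 * \<rho> ^ 2\<close> by (intro mult_mono) (simp_all add: s_def sum_nonneg)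
  finally show "(\<Sum>i\<in>UNIV. pmf P i ^ 3) \<le> 2 * sqrt 2 * \<rho> ^ 3"
    by (simp add: power2_eq_square power3_eq_cube mult_ac)
qed

lemma measure_pmf_abs_gt_le_second_moment:
  fixes X :: "'b \<Rightarrow> real"
  assumes "integrable (measure_pmf M) (\<lambda>x. X x ^ 2)" "a > 0"
  shows "measure_pmf.prob M {x. \<bar>X x\<bar> > a} \<le> measure_pmf.expectation M (\<lambda>x. X x ^ 2) / a ^ 2"
proof -
  have "measure_pmf.prob M {x. \<bar>X x\<bar> > a} \<le> measure_pmf.prob M {x \<in> space (measure_pmf M). \<bar>X x\<bar> \<ge> a}"
    by (intro measure_pmf.finite_measure_mono) auto
  also have "\<dots> \<le> measure_pmf.expectation M (\<lambda>x. X x ^ 2) / a ^ 2"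
    using assms by (intro measure_pmf.second_moment_method) simp_all
  finally show ?thesis .
qed

theorem lemma1:
  fixes P :: "'a::finite pmf" and \<rho> :: real and Q :: nat
  assumes "\<rho> > 0"
    and "sqrt (\<Sum>i\<in>UNIV. (pmf P i)^2) \<le> sqrt 2 * \<rho>"
    and "Q > 0"
    and "3 * (2 powr (7/4) * real Q powr (-1/2) * \<rho> powr (3/2) + 2 * (1 / real Q) * \<rho>) \<le> \<rho>^2 / 3"
  shows "measure_pmf.prob (iid_sample (2*Q) P)
           {x. \<bar>(\<Sum>i\<in>UNIV. empirical x {..<Q} i * empirical x {Q..<2*Q} i)
                 - (\<Sum>i\<in>UNIV. (pmf P i)^2)\<bar> > \<rho>^2 / 3} \<le> 1/3"
proof -
  define B where "B = 2 powr (7/4) * real Q powr (-1/2) * \<rho> powr (3/2) + 2 * (1 / real Q) * \<rho>"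
  define X where "X x = (\<Sum>i\<in>UNIV. empirical x {..<Q} i * empirical x {Q..<2*Q} i)
    - (\<Sum>i\<in>UNIV. pmf P i ^ 2)" for x :: "nat \<Rightarrow> 'a"
  have moment: "measure_pmf.expectation (iid_sample (2*Q) P) (\<lambda>x. X x ^ 2) \<le> B ^ 2"
    using expectation_square_inner_empirical_deviation_le[of "{..<Q}" "2*Q" "{Q..<2*Q}" P]
      second_moment_bound_le_threshold_square[OF assms(1,3) sum_pmf_power_bounds[OF assms(1,2)]]
    unfolding X_def B_def using assms(3) by fastforce
  have threshold: "(3 * B) ^ 2 \<le> (\<rho>^2 / 3) ^ 2"
    using assms(1,4) by (intro power_mono) (simp_all add: B_def)
  have "measure_pmf.prob (iid_sample (2*Q) P) {x. \<bar>X x\<bar> > \<rho>^2 / 3}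
      \<le> measure_pmf.expectation (iid_sample (2*Q) P) (\<lambda>x. X x ^ 2) / (\<rho>^2 / 3) ^ 2"
    using assms(1) by (intro measure_pmf_abs_gt_le_second_moment) (simp_all add: integrable_iid_sample)
  also have "\<dots> \<le> B ^ 2 / (\<rho>^2 / 3) ^ 2"
    using moment by (simp add: divide_right_mono)
  also have "\<dots> \<le> 1/3"
    using threshold assms(1) by (simp add: field_simps power_mult_distrib) (use zero_le_power2[of B] in linarith)
  finally show ?thesis
    unfolding X_def .
qed

end
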